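(* Let $n,m,n_f,\ell\in\mathbb{N}$, let $w>1$ be a number representable with $n$ bits of which the first $m$ are its integer part, let $F\in[0,1]$, and let $f\in[0,1]$ be given with $n_f$ bits after the binary point such that $|F-f|\leq 2^{-n_f}$. Then the value $\hat{z}$ returned by Algorithm FractionalPower$(w,f,n,m,n_f,\ell)$ (described in the context) satisfies $$|\hat{z}-w^F|\leq\left(\frac12\right)^{\ell-1}+\frac{w\ln w}{2^{n_f}}.$$
   Context: Fixed precision representation: a number $w\ge 0$ "given by $n$ bits of which the first $m$ correspond to its integer part" means $w=\sum_{j=m-n}^{m-1} w^{(j)}2^j$ with $w^{(j)}\in\{0,1\}$. For $x\geq 0$, "truncating $x$ to $b$ bits after the binary point" means replacing $x$ by $\lfloor 2^b x\rfloor/2^b$. All arithmetic inside a step is performed exactly; only the stated truncations introduce error. Algorithm SQRT$(w,n,m,b)$ (input $w\geq 1$): if $w=1$, return $1$. Otherwise: let $p\in\mathbb{N}$ with $2^{p}>w\geq 2^{p-1}$ and set $\hat{x}_0=2^{-p}$; let $s=\lceil\log_2 b\rceil$; for $i=1,\dots,s$ compute exactly $x_i=-w\hat{x}_{i-1}^2+2\hat{x}_{i-1}$ and let $\hat{x}_i$ be $x_i$ truncated to $b$ bits. Then let $q\in\mathbb{N}$ with $2^{1-q}>\hat{x}_s\geq 2^{-q}$ and set $\hat{y}_0=2^{\lfloor (q-1)/2\rfloor}$; for $j=1,\dots,s$ compute exactly $y_j=\frac12(3\hat{y}_{j-1}-\hat{x}_s\hat{y}_{j-1}^3)$ and let $\hat{y}_j$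 be $y_j$ truncated to $b$ bits. Return $\hat{y}_s$. Algorithm PowerOf2Roots$(w,k,n,m,b)$: set $\hat{z}_1=$ SQRT$(w,n,m,b)$; for $i=2,\dots,k$ set $\hat{z}_i=$ SQRT$(\hat{z}_{i-1},m+b,m,b)$. Return $\hat{z}_1,\dots,\hat{z}_k$. Algorithm FractionalPower$(w,f,n,m,n_f,\ell)$ (input $w\geq1$, $f=\sum_{i=1}^{n_f}f_i2^{-i}$ or $f=1$, bits $f_i\in\{0,1\}$): set $b=\max\{n,n_f,\lceil 5(\ell+2m+\ln n_f)\rceil,40\}$. If $f=1$ return $w$; if $f=0$ return $1$. Let $\hat{w}_1,\dots,\hat{w}_{n_f}$ be the outputs of PowerOf2Roots$(w,n_f,n,m,b)$. Set $\hat{z}=1$; for $i=1,\dots,n_f$, if $f_i=1$ replace $\hat{z}$ by $\hat{z}\hat{w}_i$ truncated to $b$ bits after the binary point. Return $\hat{z}$. *)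

theory Defs
  imports Complex_Main
begin

definition trunc_bits :: "nat \<Rightarrow> real \<Rightarrow> real" where
  "trunc_bits b x = real_of_int \<lfloor>2 ^ b * x\<rfloor> / 2 ^ b"

definition sqrt_iters :: "nat \<Rightarrow> nat" where
  "sqrt_iters b = nat \<lceil>log 2 (real b)\<rceil>"

text \<open>Stage 1 of SQRT: approximating 1/w.\<close>
definition sqrt_p :: "real \<Rightarrow> nat" where
  "sqrt_p w = (THE p::nat. 2 powr real p > w \<and> w \<ge> 2 powr (real p - 1))"

fun sqrt_x :: "real \<Rightarrow> nat \<Rightarrow> nat \<Rightarrow> real" where
  "sqrt_x w b 0 = 2 powr (- real (sqrt_p w))"
| "sqrt_x w b (Suc i) =
     trunc_bits b (- w * (sqrt_x w b i)\<^sup>2 + 2 * sqrt_x w b i)"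

definition sqrt_q :: "real \<Rightarrow> nat" where
  "sqrt_q x = (THE q::nat. 2 powr (1 - real q) > x \<and> x \<ge> 2 powr (- real q))"

text \<open>Stage 2 of SQRT: inverse square root iteration applied to xs.\<close>
fun sqrt_y :: "real \<Rightarrow> nat \<Rightarrow> nat \<Rightarrow> real" where
  "sqrt_y xs b 0 = 2 powr (real_of_int \<lfloor>(real (sqrt_q xs) - 1) / 2\<rfloor>)"
| "sqrt_y xs b (Suc j) =
     trunc_bits b ((3 * sqrt_y xs b j - xs * (sqrt_y xs b j) ^ 3) / 2)"

text \<open>Algorithm SQRT(w,n,m,b); n and m only describe the input format.\<close>
definition SQRT :: "real \<Rightarrow> nat \<Rightarrow> nat \<Rightarrow> nat \<Rightarrow> real" where
  "SQRT w n m b =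
     (if w = 1 then 1
      else sqrt_y (sqrt_x w b (sqrt_iters b)) b (sqrt_iters b))"

text \<open>PowerOf2Roots(w,k,n,m,b): pow2_roots w n m b i is \<open>\<hat>z_(i+1)\<close>.\<close>
fun pow2_roots :: "real \<Rightarrow> nat \<Rightarrow> nat \<Rightarrow> nat \<Rightarrow> nat \<Rightarrow> real" where
  "pow2_roots w n m b 0 = SQRT w n m b"
| "pow2_roots w n m b (Suc i) = SQRT (pow2_roots w n m b i) (m + b) m b"

definition frac_bit :: "real \<Rightarrow> nat \<Rightarrow> int" where
  "frac_bit f i = \<lfloor>2 ^ i * f\<rfloor> mod 2"

definition fp_b :: "nat \<Rightarrow> nat \<Rightarrow> nat \<Rightarrow> nat \<Rightarrow> nat" where
  "fp_b n m nf l = Max {n, nf, nat \<lceil>5 * (real l + 2 * real m + ln (real nf))\<rceil>, 40}"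

text \<open>Product loop: fp_loop ... i is \<open>\<hat>z\<close> after processing bits 1..i.\<close>
fun fp_loop :: "real \<Rightarrow> real \<Rightarrow> nat \<Rightarrow> nat \<Rightarrow> nat \<Rightarrow> nat \<Rightarrow> real" where
  "fp_loop w f n m b 0 = 1"
| "fp_loop w f n m b (Suc i) =
     (if frac_bit f (Suc i) = 1
      then trunc_bits b (fp_loop w f n m b i * pow2_roots w n m b i)
      else fp_loop w f n m b i)"

definition FractionalPower :: "real \<Rightarrow> real \<Rightarrow> nat \<Rightarrow> nat \<Rightarrow> nat \<Rightarrow> nat \<Rightarrow> real" where
  "FractionalPower w f n m nf l =
     (let b = fp_b n m nf l in
      if f = 1 then w else if f = 0 then 1 else fp_loop w f n m b nf)"

end

theory Submission
  imports Defs "HOL-Analysis.Complex_Transcendental"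
begin

text \<open>Writing \<open>f = \<Sum>\<^sub>i f\<^sub>i 2^(-i)\<close>, the algorithm computes \<open>w^f\<close> as the product of the
  iterated square roots \<open>w^(1/2^i)\<close> with \<open>f\<^sub>i = 1\<close>. Each call of SQRT runs two Newton
  iterations, one for \<open>1/w\<close> and one for the inverse square root of the result; both converge
  quadratically, so after \<open>\<lceil>log\<^sub>2 b\<rceil>\<close> steps only the truncation errors remain and the relative
  error is of order \<open>2^(-3b/8) + 2^m/2^b\<close>. Along the chain of square roots an inherited error is
  halved at each step, and in the product loop the relative errors add up, so the total error
  is of order \<open>n\<^sub>f 4^m 2^(-3b/8)\<close>, which the choice of \<open>b\<close> makes smaller than \<open>2^(-\<ell>)\<close>.
  Replacing \<open>F\<close> by \<open>f\<close> costs at most \<open>w ln w |F - f|\<close> by the mean value theorem.\<close>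

text \<open>The invariant closes because \<open>(a + 3 \<delta>)\<^sup>2 \<le> a\<^sup>2 + 2 \<delta>\<close> for \<open>a \<le> 1/4\<close> and \<open>\<delta> \<le> 1/18\<close>.\<close>
lemma quadratic_recurrence_bound:
  fixes e :: "nat \<Rightarrow> real"
  assumes e_nonneg: "\<And>i. 0 \<le> e i" and e_step: "\<And>i. e (Suc i) \<le> (e i)\<^sup>2 + \<delta>"
    and "0 \<le> \<delta>" "\<delta> \<le> 1/18" and "0 \<le> c" "c \<le> 1/4" and e_0: "e 0 \<le> c + 3 * \<delta>"
  shows "e k \<le> c ^ 2 ^ k + 3 * \<delta>"
proof (induction k)
  case 0
  then show ?case using e_0 by simp
next
  case (Suc k)
  define a where "a = c ^ 2 ^ k"
  have "0 \<le> a" "a \<le> 1/4"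
    unfolding a_def using \<open>0 \<le> c\<close> \<open>c \<le> 1/4\<close> power_le_one[of c] power_decreasing[of 1 "2 ^ k" c]
    by auto
  have "(e k)\<^sup>2 \<le> (a + 3 * \<delta>)\<^sup>2"
    using Suc e_nonneg[of k] unfolding a_def by (intro power_mono) auto
  also have "\<dots> = a\<^sup>2 + \<delta> * (6 * a + 9 * \<delta>)" by (simp add: power2_eq_square algebra_simps)
  also have "\<dots> \<le> a\<^sup>2 + \<delta> * 2"
    using \<open>0 \<le> a\<close> \<open>a \<le> 1/4\<close> \<open>0 \<le> \<delta>\<close> \<open>\<delta> \<le> 1/18\<close> by (intro add_left_mono mult_left_mono) auto
  finally have "e (Suc k) \<le> a\<^sup>2 + 3 * \<delta>" using e_step[of k] by simp
  moreover have "a\<^sup>2 = c ^ 2 ^ Suc k" unfolding a_def by (simp add: power_mult[symmetric] mult.commute)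
  ultimately show ?case by simp
qed

lemma abs_sqrt_diff_le_half:
  fixes a c :: real
  assumes "1 \<le> a" "1 \<le> c"
  shows "\<bar>sqrt a - sqrt c\<bar> \<le> \<bar>a - c\<bar> / 2"
proof -
  have "1 \<le> sqrt a" "1 \<le> sqrt c" using assms by auto
  have "a - c = (sqrt a - sqrt c) * (sqrt a + sqrt c)" using assms by (simp add: algebra_simps)
  then have "\<bar>a - c\<bar> = \<bar>sqrt a - sqrt c\<bar> * (sqrt a + sqrt c)"
    using \<open>1 \<le> sqrt a\<close> \<open>1 \<le> sqrt c\<close> by (simp add: abs_mult)
  moreover have "\<bar>sqrt a - sqrt c\<bar> * 2 \<le> \<bar>sqrt a - sqrt c\<bar> * (sqrt a + sqrt c)"
    using \<open>1 \<le> sqrt a\<close> \<open>1 \<le> sqrt c\<close> by (intro mult_left_mono) linarith+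
  ultimately show ?thesis by simp
qed

lemma sqrt_le_self: "1 \<le> x \<Longrightarrow> sqrt x \<le> x"
  by (rule real_le_lsqrt) (auto simp: power2_eq_square)

lemma powr_diff_le_mult_ln:
  fixes w a c :: real
  assumes "1 < w" "0 \<le> c" "c \<le> a" "a \<le> 1"
  shows "w powr a - w powr c \<le> w * ln w * (a - c)"
proof -
  define d where "d = (a - c) * ln w"
  have "0 \<le> d" unfolding d_def using assms by simp
  have split: "w powr a = w powr c * exp d"
    unfolding d_def using assms by (simp add: powr_def exp_add[symmetric] algebra_simps)
  have "(1 - d) * exp d \<le> exp (- d) * exp d"
    using exp_ge_add_one_self[of "- d"] by (intro mult_right_mono) auto
  then have "exp d - 1 \<le> d * exp d" by (simp add: exp_minus field_simps)
  then have "w powr c * (exp d - 1) \<le> w powr c * (d * exp d)" by (intro mult_left_mono) auto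
  then have "w powr a - w powr c \<le> w powr c * (d * exp d)"
    unfolding split by (simp add: right_diff_distrib)
  also have "\<dots> = w powr a * ln w * (a - c)" unfolding split d_def by simp
  also have "\<dots> \<le> w * ln w * (a - c)"
    using assms powr_mono[of a 1 w] by (intro mult_right_mono) auto
  finally show ?thesis .
qed

lemma abs_powr_diff_le:
  fixes w a c :: real
  assumes "1 < w" "0 \<le> a" "a \<le> 1" "0 \<le> c" "c \<le> 1"
  shows "\<bar>w powr a - w powr c\<bar> \<le> w * ln w * \<bar>a - c\<bar>"
proof (cases "c \<le> a")
  case True
  then show ?thesis
    using powr_diff_le_mult_ln[of w c a] powr_mono[of c a w] assms by simp
next
  case False
  then show ?thesis
    using powr_diff_le_mult_ln[of w a c] powr_mono[of a c w] assms by (simp add: abs_minus_commute)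
qed

lemma ln_2_gt_two_thirds: "2/3 < ln (2::real)"
proof -
  have "exp (2::real) = exp 1 * exp 1" by (simp flip: exp_add)
  also have "\<dots> < 272/100 * (272/100)" using e_less_272 by (intro mult_strict_mono) auto
  also have "\<dots> < exp (ln 8)" by simp
  also have "ln (8::real) = 3 * ln 2" using ln_realpow[of 2 3] by simp
  finally show ?thesis by simp
qed

lemma one_eighth_power_eq: "(1/8::real) ^ 2 ^ k = 2 powr (-(3/8) * 2 ^ (k + 3))"
proof -
  have "(1/8::real) ^ 2 ^ k = 1 / 2 ^ (3 * 2 ^ k)" by (simp add: power_mult power_one_over)
  also have "\<dots> = 2 powr (- real (3 * 2 ^ k))"
    by (simp only: powr_minus powr_realpow[symmetric] divide_inverse)
  finally show ?thesis by (simp add: power_add)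
qed

lemma sum_two_powr_interval:
  "(\<Sum>j\<in>{c - int k + 1 .. c}. (2::real) powr real_of_int j)
    = 2 powr real_of_int (c + 1) - 2 powr real_of_int (c - int k + 1)"
proof (induction k)
  case 0
  then show ?case by simp
next
  case (Suc k)
  have "{c - int (Suc k) + 1 .. c} = insert (c - int k) {c - int k + 1 .. c}" by auto
  moreover have "(2::real) powr real_of_int (c - int k + 1) = 2 * 2 powr real_of_int (c - int k)"
    by (simp add: powr_add)
  ultimately show ?case using Suc by simp
qed

lemma binary_number_le:
  fixes d :: "int \<Rightarrow> nat"
  assumes "\<forall>j. d j \<le> 1"
  shows "(\<Sum>j\<in>{int m - int n .. int m - 1}. real (d j) * 2 powr real_of_int j) \<le> 2 ^ m"
proof -
  have "(\<Sum>j\<in>{int m - int n .. int m - 1}. real (d j) * 2 powr real_of_int j)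
      \<le> (\<Sum>j\<in>{int m - int n .. int m - 1}. 2 powr real_of_int j)"
    using assms by (intro sum_mono) (simp add: mult_le_cancel_right1)
  also have "{int m - int n .. int m - 1} = {(int m - 1) - int n + 1 .. int m - 1}" by auto
  also have "(\<Sum>j\<in>{(int m - 1) - int n + 1 .. int m - 1}. (2::real) powr real_of_int j)
      \<le> 2 powr real_of_int (int m - 1 + 1)"
    unfolding sum_two_powr_interval by simp
  finally show ?thesis by (simp add: powr_realpow)
qed

lemma binary_fraction_scaled_in_Ints:
  fixes fb :: "nat \<Rightarrow> nat"
  shows "2 ^ k * (\<Sum>i=1..k. real (fb i) * 2 powr (- real i)) \<in> \<int>"
proof -
  have "2 ^ k * (\<Sum>i=1..k. real (fb i) * 2 powr (- real i)) = (\<Sum>i=1..k. real (fb i) * 2 ^ (k - i))"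
    unfolding sum_distrib_left
  proof (rule sum.cong)
    fix i assume "i \<in> {1..k}"
    then have "(2::real) ^ k = 2 ^ (k - i) * 2 powr real i"
      by (simp add: powr_realpow power_add[symmetric])
    then show "2 ^ k * (real (fb i) * 2 powr (- real i)) = real (fb i) * 2 ^ (k - i)"
      by (simp add: powr_minus field_simps)
  qed simp
  then show ?thesis by (simp add: Ints_sum)
qed

section \<open>Truncation to b fractional bits\<close>

lemma trunc_bits_le: "trunc_bits b x \<le> x"
  unfolding trunc_bits_def by (simp add: divide_le_eq mult.commute)

lemma trunc_bits_gt: "x - 1 / 2 ^ b < trunc_bits b x"
proof -
  have "2 ^ b * x < real_of_int \<lfloor>2 ^ b * x\<rfloor> + 1" by linarith
  then have "x < (real_of_int \<lfloor>2 ^ b * x\<rfloor> + 1) / 2 ^ b"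
    by (simp add: pos_less_divide_eq mult.commute)
  then show ?thesis unfolding trunc_bits_def by (simp add: add_divide_distrib)
qed

lemma abs_trunc_bits_diff_le: "\<bar>trunc_bits b x - x\<bar> \<le> 1 / 2 ^ b"
  using trunc_bits_le[of b x] trunc_bits_gt[of x b] by linarith

lemma trunc_bits_in_grid: "2 ^ b * trunc_bits b x \<in> \<int>"
  unfolding trunc_bits_def by simp

lemma trunc_bits_ge_grid_point:
  assumes "2 ^ b * g \<in> \<int>" and "g \<le> x"
  shows "g \<le> trunc_bits b x"
proof -
  obtain k where k: "2 ^ b * g = real_of_int k" using assms(1) Ints_cases by metis
  have "real_of_int k \<le> 2 ^ b * x" using k assms(2) by (metis mult_left_mono zero_le_numeral zero_le_power)
  then have "real_of_int k \<le> real_of_int \<lfloor>2 ^ b * x\<rfloor>" by (simp add: le_floor_iff)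
  then show ?thesis unfolding trunc_bits_def using k by (simp add: field_simps)
qed

lemma trunc_bits_product_error:
  fixes Z P zh z T E :: real
  assumes "\<bar>Z - P\<bar> \<le> P * T" "\<bar>zh - z\<bar> \<le> E" "1 \<le> zh" "1 \<le> P" "1 \<le> z" "0 \<le> T" "0 \<le> E"
  shows "\<bar>trunc_bits b (Z * zh) - P * z\<bar> \<le> P * z * (T + T * (E + 1 / 2 ^ b) + (E + 1 / 2 ^ b))"
proof -
  have "\<bar>Z * zh - P * z\<bar> = \<bar>(Z - P) * zh + P * (zh - z)\<bar>" by (simp add: algebra_simps)
  also have "\<dots> \<le> \<bar>Z - P\<bar> * zh + P * \<bar>zh - z\<bar>"
    using assms by (simp add: abs_mult abs_triangle_ineq[THEN order_trans])
  also have "\<dots> \<le> P * T * (z + E) + P * E"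
    using assms by (intro add_mono mult_mono mult_left_mono) auto
  also have "\<dots> \<le> P * z * (T + T * E + E)"
    using assms mult_left_mono[of 1 z "P * T * E"] mult_left_mono[of 1 z "P * E"]
    by (simp add: algebra_simps)
  finally have "\<bar>Z * zh - P * z\<bar> \<le> P * z * (T + T * E + E)" .
  moreover have "1 \<le> P * z" using assms mult_mono[of 1 P 1 z] by simp
  moreover have "\<bar>trunc_bits b (Z * zh) - Z * zh\<bar> \<le> 1 / 2 ^ b" by (rule abs_trunc_bits_diff_le)
  ultimately have "\<bar>trunc_bits b (Z * zh) - P * z\<bar> \<le> P * z * (T + T * E + E) + P * z * (1 / 2 ^ b)"
    using mult_right_mono[of 1 "P * z" "1 / 2 ^ b"] by simp
  also have "\<dots> \<le> P * z * (T + T * (E + 1 / 2 ^ b) + (E + 1 / 2 ^ b))"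
    unfolding distrib_left[symmetric] using assms mult_mono[of 1 P 1 z]
    by (intro mult_left_mono) (auto simp: distrib_left)
  finally show ?thesis .
qed

section \<open>Algorithm SQRT\<close>

lemma sqrt_p_bounds:
  assumes "1 \<le> v"
  shows "2 powr (real (sqrt_p v) - 1) \<le> v" and "v < 2 powr real (sqrt_p v)"
proof -
  let ?P = "\<lambda>p::nat. 2 powr real p > v \<and> v \<ge> 2 powr (real p - 1)"
  have char: "?P p \<longleftrightarrow> \<lfloor>log 2 v\<rfloor> = int p - 1" for p
    using assms by (auto simp: floor_log_eq_powr_iff)
  have "0 \<le> \<lfloor>log 2 v\<rfloor>" using assms by simp
  then have "?P (nat (\<lfloor>log 2 v\<rfloor> + 1))" by (subst char) simp
  then have "?P (sqrt_p v)"
    unfolding sqrt_p_def by (rule theI) (simp add: char)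
  then show "2 powr (real (sqrt_p v) - 1) \<le> v" "v < 2 powr real (sqrt_p v)" by auto
qed

lemma sqrt_q_bounds:
  assumes "0 < x" and "x < 1"
  shows "2 powr (- real (sqrt_q x)) \<le> x" and "x < 2 powr (1 - real (sqrt_q x))"
    and "1 \<le> sqrt_q x"
proof -
  let ?P = "\<lambda>q::nat. 2 powr (1 - real q) > x \<and> x \<ge> 2 powr (- real q)"
  have char: "?P q \<longleftrightarrow> \<lfloor>log 2 x\<rfloor> = - int q" for q
    using assms by (auto simp: floor_log_eq_powr_iff add.commute)
  have "log 2 x < 0" using assms by simp
  then have "?P (nat (- \<lfloor>log 2 x\<rfloor>))" by (subst char) simp
  then have P: "?P (sqrt_q x)"
    unfolding sqrt_q_def by (rule theI) (simp add: char)
  then show "2 powr (- real (sqrt_q x)) \<le> x" "x < 2 powr (1 - real (sqrt_q x))" by auto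
  show "1 \<le> sqrt_q x"
    using P assms by (cases "sqrt_q x") auto
qed

lemma sqrt_iters_bounds:
  assumes "40 \<le> b"
  shows "real b \<le> 2 ^ sqrt_iters b" and "3 \<le> sqrt_iters b"
proof -
  have "log 2 (real b) \<le> real (sqrt_iters b)" unfolding sqrt_iters_def by linarith
  then have "2 powr log 2 (real b) \<le> 2 powr real (sqrt_iters b)" by (intro powr_mono) auto
  then show "real b \<le> 2 ^ sqrt_iters b" using assms by (simp add: powr_realpow)
  have "2 powr (3::real) < real b" using assms by simp
  then have "3 < log 2 (real b)" using assms by (subst less_log_iff) auto
  then show "3 \<le> sqrt_iters b" unfolding sqrt_iters_def by linarith
qed

lemma sqrt_x_step_error:
  fixes v X :: real and b :: nat
  assumes "0 < v"
  defines "X' \<equiv> trunc_bits b (- v * X\<^sup>2 + 2 * X)"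
  shows "1 - v * X' \<le> (1 - v * X)\<^sup>2 + v / 2 ^ b" and "0 \<le> 1 - v * X'"
proof -
  have "v * (- v * X\<^sup>2 + 2 * X - 1 / 2 ^ b) \<le> v * X'"
    using trunc_bits_gt assms unfolding X'_def by (intro mult_left_mono) (auto intro: less_imp_le)
  then show "1 - v * X' \<le> (1 - v * X)\<^sup>2 + v / 2 ^ b"
    by (simp add: power2_eq_square algebra_simps)
  have "v * X' \<le> v * (- v * X\<^sup>2 + 2 * X)"
    using trunc_bits_le assms unfolding X'_def by (intro mult_left_mono) auto
  also have "\<dots> = 1 - (1 - v * X)\<^sup>2" by (simp add: power2_eq_square algebra_simps)
  finally show "0 \<le> 1 - v * X'" using zero_le_power2[of "1 - v * X"] by linarith
qed

lemma sqrt_x_error: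
  fixes v :: real
  assumes "1 \<le> v" and small: "v / 2 ^ b \<le> 1/18"
  shows "0 \<le> 1 - v * sqrt_x v b k"
    and "1 - v * sqrt_x v b (Suc k) \<le> (1/2) ^ 2 ^ Suc k + 3 * (v / 2 ^ b)"
proof -
  define \<epsilon> where "\<epsilon> i = 1 - v * sqrt_x v b i" for i
  have step: "\<epsilon> (Suc i) \<le> (\<epsilon> i)\<^sup>2 + v / 2 ^ b" "0 \<le> \<epsilon> (Suc i)" for i
    using sqrt_x_step_error[of v b "sqrt_x v b i"] assms unfolding \<epsilon>_def by auto
  have "v * 2 powr (- real (sqrt_p v)) < 1" "1/2 \<le> v * 2 powr (- real (sqrt_p v))"
    using sqrt_p_bounds[OF \<open>1 \<le> v\<close>] by (simp_all add: powr_minus powr_diff divide_simps)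
  then have \<epsilon>_0: "0 \<le> \<epsilon> 0" "\<epsilon> 0 \<le> 1/2" unfolding \<epsilon>_def by simp_all
  show "0 \<le> 1 - v * sqrt_x v b k"
    using \<epsilon>_0 step unfolding \<epsilon>_def[symmetric] by (cases k) auto
  have "(\<epsilon> 0)\<^sup>2 \<le> (1/2)\<^sup>2" using \<epsilon>_0 by (intro power_mono) auto
  then have "(\<epsilon> 0)\<^sup>2 \<le> 1/4" by (simp add: power2_eq_square)
  moreover have "0 \<le> v / 2 ^ b" using assms by simp
  ultimately have "\<epsilon> (Suc 0) \<le> 1/4 + 3 * (v / 2 ^ b)" using step(1)[of 0] by linarith
  then have "\<epsilon> (Suc k) \<le> (1/4) ^ 2 ^ k + 3 * (v / 2 ^ b)"
    using quadratic_recurrence_bound[of "\<lambda>i. \<epsilon> (Suc i)" "v / 2 ^ b" "1/4" k] step small assms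
    by simp
  moreover have "(1/4::real) ^ 2 ^ k = (1/2) ^ 2 ^ Suc k"
    by (simp add: power_mult power_one_over)
  ultimately show "1 - v * sqrt_x v b (Suc k) \<le> (1/2) ^ 2 ^ Suc k + 3 * (v / 2 ^ b)"
    unfolding \<epsilon>_def by simp
qed

lemma sqrt_x_final_error:
  fixes v :: real
  assumes "1 \<le> v" "v / 2 ^ b \<le> 1/18" "40 \<le> b"
  shows "0 \<le> 1 - v * sqrt_x v b (sqrt_iters b)"
    and "1 - v * sqrt_x v b (sqrt_iters b) \<le> 1 / 2 ^ b + 3 * (v / 2 ^ b)"
proof -
  define s where "s = sqrt_iters b"
  have s: "real b \<le> 2 ^ s" "3 \<le> s" using sqrt_iters_bounds[OF assms(3)] unfolding s_def by auto
  show "0 \<le> 1 - v * sqrt_x v b (sqrt_iters b)" using sqrt_x_error(1) assms by simp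
  have "(1/2::real) ^ 2 ^ s \<le> (1/2) ^ b"
    using s(1) by (intro power_decreasing) (auto simp: of_nat_le_iff[symmetric])
  moreover have "1 - v * sqrt_x v b s \<le> (1/2) ^ 2 ^ s + 3 * (v / 2 ^ b)"
    using sqrt_x_error(2)[OF assms(1,2), of "s - 1"] s(2) by simp
  ultimately show "1 - v * sqrt_x v b (sqrt_iters b) \<le> 1 / 2 ^ b + 3 * (v / 2 ^ b)"
    unfolding s_def by (simp add: power_one_over)
qed

text \<open>With \<open>t = Y \<surd>x\<close> the exact update maps \<open>t\<close> to \<open>(3 t - t\<^sup>3) / 2\<close>, and
  \<open>1 - (3 t - t\<^sup>3) / 2 = (1 - t)\<^sup>2 (2 + t) / 2\<close>.\<close>
lemma sqrt_y_step_error: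
  fixes x Y :: real and b :: nat
  assumes "0 < x" "x \<le> 1" "0 < Y" and grid: "2 ^ b * Y \<in> \<int>" and "Y * sqrt x \<le> 1"
  defines "Y' \<equiv> trunc_bits b ((3 * Y - x * Y ^ 3) / 2)"
  shows "Y \<le> Y'" and "Y' * sqrt x \<le> 1"
    and "1 - Y' * sqrt x \<le> 3/2 * (1 - Y * sqrt x)\<^sup>2 + 1 / 2 ^ b"
proof -
  define s where "s = sqrt x"
  define t where "t = Y * s"
  define g where "g = (3 * Y - x * Y ^ 3) / 2"
  have "0 < s" "s \<le> 1" using assms unfolding s_def by auto
  have "0 \<le> t" "t \<le> 1" using assms \<open>0 < s\<close> unfolding t_def s_def by auto
  have gs: "g * s = (3 * t - t ^ 3) / 2"
    using \<open>0 < x\<close> unfolding g_def t_def s_def by (simp add: algebra_simps power3_eq_cube)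
  have defect: "1 - (3 * t - t ^ 3) / 2 = (1 - t)\<^sup>2 * (2 + t) / 2"
    by (simp add: power2_eq_square power3_eq_cube field_simps)
  have "t ^ 3 \<le> t"
    using \<open>0 \<le> t\<close> \<open>t \<le> 1\<close> power_decreasing[of 1 3 t] by simp
  then have "Y * s \<le> g * s" unfolding gs t_def by simp
  then have "Y \<le> g" using \<open>0 < s\<close> by simp
  then show "Y \<le> Y'" unfolding Y'_def g_def[symmetric] by (rule trunc_bits_ge_grid_point[OF grid])
  have "Y' * s \<le> g * s"
    unfolding Y'_def g_def using \<open>0 < s\<close> by (intro mult_right_mono trunc_bits_le) auto
  moreover have "0 \<le> (1 - t)\<^sup>2 * (2 + t) / 2" using \<open>0 \<le> t\<close> by simp
  then have "(3 * t - t ^ 3) / 2 \<le> 1" using defect by linarith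
  ultimately show "Y' * sqrt x \<le> 1" using gs unfolding s_def by simp
  have "(g - 1 / 2 ^ b) * s \<le> Y' * s"
    unfolding Y'_def g_def using \<open>0 < s\<close> trunc_bits_gt by (intro mult_right_mono) (auto intro: less_imp_le)
  moreover have "1 / 2 ^ b * s \<le> 1 / 2 ^ b" using \<open>s \<le> 1\<close> by (simp add: divide_right_mono)
  ultimately have "1 - Y' * s \<le> 1 - (3 * t - t ^ 3) / 2 + 1 / 2 ^ b"
    using gs by (simp add: left_diff_distrib)
  moreover have "(1 - t)\<^sup>2 * (2 + t) \<le> (1 - t)\<^sup>2 * 3"
    using \<open>t \<le> 1\<close> by (intro mult_left_mono) auto
  ultimately show "1 - Y' * sqrt x \<le> 3/2 * (1 - Y * sqrt x)\<^sup>2 + 1 / 2 ^ b"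
    using defect unfolding t_def s_def by linarith
qed

lemma sqrt_y_0_bounds:
  fixes x :: real
  assumes "0 < x" "x < 1"
  shows "1 \<le> sqrt_y x b 0" and "2 ^ b * sqrt_y x b 0 \<in> \<int>"
    and "1/2 \<le> sqrt_y x b 0 * sqrt x" and "sqrt_y x b 0 * sqrt x \<le> 1"
proof -
  define q where "q = sqrt_q x"
  define k where "k = (int q - 1) div 2"
  have "1 \<le> q" using sqrt_q_bounds(3)[OF assms] unfolding q_def .
  then have "0 \<le> k" "int q - 2 \<le> 2 * k" "2 * k \<le> int q - 1" unfolding k_def by linarith+
  then have k_le: "2 * real_of_int k \<le> real q - 1" and k_ge: "real q - 2 \<le> 2 * real_of_int k"
    by linarith+
  have "\<lfloor>(real q - 1) / 2\<rfloor> = k"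
    unfolding k_def using floor_divide_of_int_eq[of "int q - 1" 2, where 'a=real] by simp
  then have y0: "sqrt_y x b 0 = 2 ^ nat k"
    using \<open>0 \<le> k\<close> by (simp add: q_def[symmetric] powr_realpow[symmetric])
  then show "1 \<le> sqrt_y x b 0" by simp
  show "2 ^ b * sqrt_y x b 0 \<in> \<int>" unfolding y0 by simp
  have "sqrt (2 powr (2 * real_of_int k)) = (2 powr (2 * real_of_int k)) powr (1/2)"
    by (simp add: powr_half_sqrt)
  also have "\<dots> = 2 ^ nat k" using \<open>0 \<le> k\<close> by (simp add: powr_powr powr_realpow[symmetric])
  finally have root: "sqrt_y x b 0 * sqrt x = sqrt (2 powr (2 * real_of_int k) * x)"
    unfolding y0 by (simp add: real_sqrt_mult)
  have "2 powr (-2) \<le> 2 powr (2 * real_of_int k) * 2 powr (- real q)"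
    using k_ge by (simp add: powr_add[symmetric])
  also have "\<dots> \<le> 2 powr (2 * real_of_int k) * x"
    using sqrt_q_bounds(1)[OF assms] unfolding q_def by simp
  finally have "sqrt (1/4) \<le> sqrt (2 powr (2 * real_of_int k) * x)"
    by (intro real_sqrt_le_mono) (simp add: powr_minus)
  then show "1/2 \<le> sqrt_y x b 0 * sqrt x"
    unfolding root by (simp add: real_sqrt_divide)
  have "2 powr (2 * real_of_int k) * x \<le> 2 powr (2 * real_of_int k) * 2 powr (1 - real q)"
    using sqrt_q_bounds(2)[OF assms] unfolding q_def by simp
  also have "\<dots> = 2 powr (2 * real_of_int k + (1 - real q))" by (simp add: powr_add)
  also have "\<dots> \<le> 2 powr 0" using k_le by (intro powr_mono) auto
  finally show "sqrt_y x b 0 * sqrt x \<le> 1" unfolding root by simp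
qed

lemma sqrt_y_invariant:
  fixes x :: real
  assumes "0 < x" "x < 1"
  shows "sqrt_y x b 0 \<le> sqrt_y x b j \<and> sqrt_y x b j * sqrt x \<le> 1 \<and> 2 ^ b * sqrt_y x b j \<in> \<int>"
proof (induction j)
  case 0
  then show ?case using sqrt_y_0_bounds[OF assms] by simp
next
  case (Suc j)
  have "0 < sqrt_y x b j" using Suc sqrt_y_0_bounds(1)[OF assms, of b] by linarith
  then show ?case
    using Suc sqrt_y_step_error(1,2)[of x "sqrt_y x b j" b] assms trunc_bits_in_grid by fastforce
qed

lemma sqrt_y_bounds:
  fixes x :: real
  assumes "0 < x" "x < 1"
  shows "1 \<le> sqrt_y x b j" and "1/2 \<le> sqrt_y x b j * sqrt x" and "sqrt_y x b j * sqrt x \<le> 1"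
proof -
  note y0 = sqrt_y_0_bounds[OF assms, of b] and inv = sqrt_y_invariant[OF assms, of b j]
  show "1 \<le> sqrt_y x b j" using y0 inv by linarith
  show "sqrt_y x b j * sqrt x \<le> 1" using inv by blast
  have "sqrt_y x b 0 * sqrt x \<le> sqrt_y x b j * sqrt x"
    using inv assms by (intro mult_right_mono) auto
  then show "1/2 \<le> sqrt_y x b j * sqrt x" using y0 by linarith
qed

lemma sqrt_y_error:
  fixes x :: real
  assumes "0 < x" "x < 1" and small: "1500 \<le> (2::real) ^ b"
  shows "1 - sqrt_y x b (k + 3) * sqrt x \<le> (1/8) ^ 2 ^ k + 9/2 / 2 ^ b"
proof -
  \<comment> \<open>scaled by \<open>3/2\<close>, the defect obeys \<open>e' \<le> e\<^sup>2 + \<delta>\<close>\<close>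
  define e where "e i = 3/2 * (1 - sqrt_y x b i * sqrt x)" for i
  define \<delta> :: real where "\<delta> = 3/2 / 2 ^ b"
  have "0 \<le> \<delta>" unfolding \<delta>_def by simp
  have "\<delta> \<le> 1/1000" unfolding \<delta>_def using small by (simp add: divide_simps)
  have e_nonneg: "0 \<le> e i" for i unfolding e_def using sqrt_y_bounds(3)[OF assms(1,2)] by simp
  have e_step: "e (Suc i) \<le> (e i)\<^sup>2 + \<delta>" for i
  proof -
    have "0 < sqrt_y x b i" using sqrt_y_bounds(1)[OF assms(1,2)] by (rule less_le_trans[OF zero_less_one])
    then have "1 - sqrt_y x b (Suc i) * sqrt x \<le> 3/2 * (1 - sqrt_y x b i * sqrt x)\<^sup>2 + 1 / 2 ^ b"
      using sqrt_y_step_error(3)[of x "sqrt_y x b i" b] assms sqrt_y_invariant[OF assms(1,2)] by simp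
    then show ?thesis unfolding e_def \<delta>_def by (simp add: power2_eq_square field_simps)
  qed
  have "e 0 \<le> 3/4"
    unfolding e_def using sqrt_y_bounds(2)[OF assms(1,2)] by (simp add: mult.commute del: sqrt_y.simps)
  then have "(e 0)\<^sup>2 \<le> (3/4)\<^sup>2" using e_nonneg by (intro power_mono) auto
  then have "e 1 \<le> 9/16 + 1/1000" using e_step[of 0] \<open>\<delta> \<le> 1/1000\<close> by (simp add: power2_eq_square)
  then have "(e 1)\<^sup>2 \<le> (9/16 + 1/1000)\<^sup>2" using e_nonneg by (intro power_mono) auto
  then have "e 2 \<le> 1/3" using e_step[of 1] \<open>\<delta> \<le> 1/1000\<close> by (simp add: numeral_2_eq_2 power2_eq_square)
  then have "(e 2)\<^sup>2 \<le> (1/3)\<^sup>2" using e_nonneg by (intro power_mono) auto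
  then have "e 3 \<le> 1/9 + \<delta>"
    using e_step[of 2] by (simp add: numeral_3_eq_3 numeral_2_eq_2 power2_eq_square)
  then have "e 3 \<le> 1/8 + 3 * \<delta>" using \<open>0 \<le> \<delta>\<close> by linarith
  then have "e (k + 3) \<le> (1/8) ^ 2 ^ k + 3 * \<delta>"
    using e_step[of "_ + 3"] \<open>0 \<le> \<delta>\<close> \<open>\<delta> \<le> 1/1000\<close>
    by (intro quadratic_recurrence_bound[of "\<lambda>i. e (i + 3)"]) (simp_all add: e_nonneg)
  moreover have "1 - sqrt_y x b (k + 3) * sqrt x \<le> e (k + 3)"
    unfolding e_def using sqrt_y_bounds(3)[OF assms(1,2)] by (simp add: mult.commute)
  ultimately show ?thesis unfolding \<delta>_def by simp
qed

lemma sqrt_y_final_error: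
  fixes x :: real
  assumes "0 < x" "x < 1" "40 \<le> b"
  shows "1 - sqrt_y x b (sqrt_iters b) * sqrt x \<le> 2 powr (-(3/8) * real b) + 9/2 / 2 ^ b"
proof -
  define s where "s = sqrt_iters b"
  have s: "real b \<le> 2 ^ s" "3 \<le> s" using sqrt_iters_bounds[OF assms(3)] unfolding s_def by auto
  have "(2::real) ^ 40 \<le> 2 ^ b" using assms(3) by (intro power_increasing) auto
  then have "1500 \<le> (2::real) ^ b" by simp
  then have "1 - sqrt_y x b s * sqrt x \<le> (1/8) ^ 2 ^ (s - 3) + 9/2 / 2 ^ b"
    using sqrt_y_error[OF assms(1,2), of b "s - 3"] s(2) by simp
  moreover have "(1/8::real) ^ 2 ^ (s - 3) \<le> 2 powr (-(3/8) * real b)"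
    using s unfolding one_eighth_power_eq by (simp add: algebra_simps)
  ultimately show ?thesis unfolding s_def by linarith
qed

text \<open>If \<open>v X = 1 - \<epsilon>\<close> and \<open>y\<close> approximates \<open>1 / \<surd>X\<close> from below, then \<open>y\<close> approximates
  \<open>\<surd>v = \<surd>(1 - \<epsilon>) / \<surd>X\<close>; the factor \<open>2\<close> bounds \<open>1 / \<surd>(1 - \<epsilon>)\<close>.\<close>
lemma sqrt_from_inverse_sqrt_error:
  fixes v X y \<epsilon> :: real
  assumes "0 < v" "v * X = 1 - \<epsilon>" "0 \<le> \<epsilon>" "\<epsilon> \<le> 1/2" "y * sqrt X \<le> 1"
  shows "\<bar>y - sqrt v\<bar> \<le> 2 * sqrt v * ((1 - y * sqrt X) + \<epsilon>)" and "y \<le> sqrt (2 * v)"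
proof -
  define t where "t = y * sqrt X"
  have X: "X = (1 - \<epsilon>) / v" using assms by (simp add: field_simps)
  then have "0 < X" using assms by simp
  have "sqrt (1/2) \<le> sqrt (1 - \<epsilon>)" using assms by (intro real_sqrt_le_mono) auto
  moreover have "1/2 \<le> sqrt (1/2::real)" by (intro real_le_rsqrt) (simp add: power2_eq_square)
  ultimately have "1/2 \<le> sqrt (1 - \<epsilon>)" by linarith
  have inv_sqrt_X: "1 / sqrt X = sqrt v / sqrt (1 - \<epsilon>)"
    unfolding X by (simp add: real_sqrt_divide)
  have "1 - \<epsilon> \<le> sqrt (1 - \<epsilon>)" using assms by (intro real_le_rsqrt) (simp add: power2_eq_square mult_le_one)
  moreover have "sqrt (1 - \<epsilon>) \<le> 1" using assms by simp
  ultimately have t_err: "\<bar>t - sqrt (1 - \<epsilon>)\<bar> \<le> (1 - t) + \<epsilon>" using assms unfolding t_def by linarith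
  have "sqrt v * sqrt X = sqrt (1 - \<epsilon>)" using assms by (simp add: real_sqrt_mult[symmetric])
  then have "t - sqrt (1 - \<epsilon>) = (y - sqrt v) * sqrt X" unfolding t_def by (simp add: algebra_simps)
  then have "\<bar>y - sqrt v\<bar> = \<bar>t - sqrt (1 - \<epsilon>)\<bar> * (1 / sqrt X)"
    using \<open>0 < X\<close> by (simp add: abs_mult)
  also have "\<dots> \<le> ((1 - t) + \<epsilon>) * (2 * sqrt v)"
    unfolding inv_sqrt_X using t_err \<open>1/2 \<le> sqrt (1 - \<epsilon>)\<close> assms
    by (intro mult_mono) (auto simp: divide_simps)
  finally show "\<bar>y - sqrt v\<bar> \<le> 2 * sqrt v * ((1 - y * sqrt X) + \<epsilon>)"
    unfolding t_def by (simp add: mult.commute)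
  have "y \<le> 1 / sqrt X" using assms \<open>0 < X\<close> by (simp add: divide_simps)
  also have "\<dots> = sqrt (v / (1 - \<epsilon>))" unfolding inv_sqrt_X by (simp add: real_sqrt_divide)
  also have "\<dots> \<le> sqrt (2 * v)" using assms by (intro real_sqrt_le_mono) (simp add: divide_simps)
  finally show "y \<le> sqrt (2 * v)" .
qed

definition sqrt_rel_error :: "nat \<Rightarrow> nat \<Rightarrow> real" where
  "sqrt_rel_error b m = 2 * (2 powr (-(3/8) * real b) + (6 + 3 * 2 ^ m) / 2 ^ b)"

lemma sqrt_rel_error_nonneg: "0 \<le> sqrt_rel_error b m"
  unfolding sqrt_rel_error_def by simp

lemma SQRT_error:
  fixes v :: real
  assumes "1 \<le> v" "v \<le> 2 ^ m" "40 \<le> b" "10 * m \<le> b"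
  shows "1 \<le> SQRT v n m' b" and "SQRT v n m' b \<le> 2 ^ m"
    and "\<bar>SQRT v n m' b - sqrt v\<bar> \<le> sqrt v * sqrt_rel_error b m"
proof -
  consider "v = 1" | "1 < v" using assms by linarith
  then have "1 \<le> SQRT v n m' b \<and> SQRT v n m' b \<le> 2 ^ m
    \<and> \<bar>SQRT v n m' b - sqrt v\<bar> \<le> sqrt v * sqrt_rel_error b m"
  proof cases
    case 1
    then show ?thesis using sqrt_rel_error_nonneg[of b m] unfolding SQRT_def by simp
  next
    case 2
    then have "1 \<le> m" using assms(2) by (cases m) auto
    have "v / 2 ^ b \<le> 2 ^ m / 2 ^ b" using assms(2) by (simp add: divide_right_mono)
    also have "\<dots> = 1 / 2 ^ (b - m)" using assms(4) by (simp add: power_diff)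
    also have "\<dots> \<le> 1 / 2 ^ 36" using assms(3,4) by (intro divide_left_mono power_increasing) auto
    finally have small: "v / 2 ^ b \<le> 1/18" using \<open>1 < v\<close> by simp
    define X where "X = sqrt_x v b (sqrt_iters b)"
    define \<epsilon> where "\<epsilon> = 1 - v * X"
    have "0 \<le> \<epsilon>" and \<epsilon>_le: "\<epsilon> \<le> 1 / 2 ^ b + 3 * (v / 2 ^ b)"
      using sqrt_x_final_error[OF assms(1) small assms(3)] unfolding \<epsilon>_def X_def by auto
    moreover have "1 / 2 ^ b \<le> (1/18::real)" using \<open>40 \<le> b\<close> small \<open>1 < v\<close> by (simp add: divide_simps)
    ultimately have "\<epsilon> \<le> 1/2" using small by linarith
    then have "0 < v * X" unfolding \<epsilon>_def by simp
    then have "0 < X" using \<open>1 < v\<close> by (simp add: zero_less_mult_iff)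
    have "X < 1"
    proof (rule ccontr)
      assume "\<not> X < 1"
      then have "v * 1 \<le> v * X" using \<open>1 < v\<close> by (intro mult_left_mono) auto
      then show False using \<open>0 \<le> \<epsilon>\<close> \<open>1 < v\<close> unfolding \<epsilon>_def by linarith
    qed
    define y where "y = sqrt_y X b (sqrt_iters b)"
    have "1 - y * sqrt X + \<epsilon> \<le> 2 powr (-(3/8) * real b) + (11/2 + 3 * v) / 2 ^ b"
      using sqrt_y_final_error[OF \<open>0 < X\<close> \<open>X < 1\<close> assms(3)] \<epsilon>_le unfolding y_def
      by (simp add: add_divide_distrib diff_divide_distrib)
    also have "\<dots> \<le> sqrt_rel_error b m / 2"
      using assms(2) unfolding sqrt_rel_error_def by (simp add: divide_right_mono)
    finally have defect: "1 - y * sqrt X + \<epsilon> \<le> sqrt_rel_error b m / 2" .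
    have "y * sqrt X \<le> 1" and "1 \<le> y"
      using sqrt_y_bounds[OF \<open>0 < X\<close> \<open>X < 1\<close>] unfolding y_def by auto
    note y_err = sqrt_from_inverse_sqrt_error[of v X \<epsilon> y, OF _ _ \<open>0 \<le> \<epsilon>\<close> \<open>\<epsilon> \<le> 1/2\<close> this(1)]
    have "\<bar>y - sqrt v\<bar> \<le> 2 * sqrt v * (1 - y * sqrt X + \<epsilon>)"
      using y_err(1) \<open>1 < v\<close> unfolding \<epsilon>_def by simp
    also have "\<dots> \<le> sqrt v * sqrt_rel_error b m" using defect \<open>1 < v\<close> by simp
    finally have "\<bar>y - sqrt v\<bar> \<le> sqrt v * sqrt_rel_error b m" .
    moreover have "y \<le> sqrt (2 * v)" using y_err(2) \<open>1 < v\<close> unfolding \<epsilon>_def by simp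
    moreover have "sqrt (2 * v) \<le> 2 ^ m"
    proof (rule real_le_lsqrt)
      have "2 * v \<le> 2 ^ Suc m" using assms(2) by simp
      also have "\<dots> \<le> 2 ^ (2 * m)" using \<open>1 \<le> m\<close> by (intro power_increasing) auto
      finally show "2 * v \<le> (2 ^ m)\<^sup>2" by (simp add: power_mult mult.commute)
    qed auto
    moreover have "SQRT v n m' b = y" using \<open>1 < v\<close> unfolding SQRT_def y_def X_def by simp
    ultimately show ?thesis using \<open>1 \<le> y\<close> by simp
  qed
  then show "1 \<le> SQRT v n m' b" "SQRT v n m' b \<le> 2 ^ m"
    "\<bar>SQRT v n m' b - sqrt v\<bar> \<le> sqrt v * sqrt_rel_error b m" by auto
qed

section \<open>Repeated square roots and the product loop\<close>

text \<open>Each square root halves the inherited error, so the accumulated error stays below twice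
  the error of a single call.\<close>
lemma pow2_roots_error:
  fixes w :: real
  assumes "1 < w" "w \<le> 2 ^ m" "40 \<le> b" "10 * m \<le> b"
  shows "1 \<le> pow2_roots w n m b i \<and> pow2_roots w n m b i \<le> 2 ^ m \<and>
    \<bar>pow2_roots w n m b i - w powr (1 / 2 ^ Suc i)\<bar> \<le> 2 * (2 ^ m * sqrt_rel_error b m)"
proof (induction i)
  case 0
  have "sqrt w * sqrt_rel_error b m \<le> 2 ^ m * sqrt_rel_error b m"
    using sqrt_le_self[of w] assms sqrt_rel_error_nonneg by (intro mult_right_mono) auto
  moreover have "w powr (1 / 2 ^ Suc 0) = sqrt w" using assms by (simp add: powr_half_sqrt)
  ultimately show ?case
    using SQRT_error[of w m b n m] assms sqrt_rel_error_nonneg[of b m] by simp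
next
  case (Suc i)
  define v where "v = pow2_roots w n m b i"
  define z where "z = w powr (1 / 2 ^ Suc i)"
  have "1 \<le> v" "v \<le> 2 ^ m" and err: "\<bar>v - z\<bar> \<le> 2 * (2 ^ m * sqrt_rel_error b m)"
    using Suc unfolding v_def z_def by auto
  have "1 \<le> z" unfolding z_def using assms by (simp add: ge_one_powr_ge_zero)
  have "sqrt v * sqrt_rel_error b m \<le> 2 ^ m * sqrt_rel_error b m"
    using sqrt_le_self[OF \<open>1 \<le> v\<close>] \<open>v \<le> 2 ^ m\<close> sqrt_rel_error_nonneg by (intro mult_right_mono) auto
  moreover have "\<bar>sqrt v - sqrt z\<bar> \<le> 2 ^ m * sqrt_rel_error b m"
    using abs_sqrt_diff_le_half[OF \<open>1 \<le> v\<close> \<open>1 \<le> z\<close>] err by simp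
  moreover have "w powr (1 / 2 ^ Suc (Suc i)) = sqrt z"
    unfolding z_def using assms by (simp add: powr_half_sqrt[symmetric] powr_powr)
  ultimately show ?case
    using SQRT_error[OF \<open>1 \<le> v\<close> \<open>v \<le> 2 ^ m\<close> assms(3,4), of "m + b" m] unfolding v_def by auto
qed

definition frac_bits_sum :: "real \<Rightarrow> nat \<Rightarrow> real" where
  "frac_bits_sum f k = (\<Sum>i<k. if frac_bit f (Suc i) = 1 then (1/2) ^ Suc i else 0)"

lemma frac_bits_sum_nonneg: "0 \<le> frac_bits_sum f k"
  unfolding frac_bits_sum_def by (intro sum_nonneg) auto

lemma frac_bits_sum_eq: "frac_bits_sum f k = real_of_int \<lfloor>2 ^ k * f\<rfloor> / 2 ^ k - real_of_int \<lfloor>f\<rfloor>"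
proof (induction k)
  case 0
  then show ?case by (simp add: frac_bits_sum_def)
next
  case (Suc k)
  define a where "a = \<lfloor>2 ^ Suc k * f\<rfloor>"
  have "\<lfloor>2 ^ k * f\<rfloor> = a div 2"
    unfolding a_def using floor_divide_real_eq_div[of 2 "2 ^ Suc k * f"] by simp
  moreover have "real_of_int a = real_of_int (2 * (a div 2) + a mod 2)" by simp
  then have "real_of_int a = 2 * real_of_int (a div 2) + real_of_int (a mod 2)"
    by (simp only: of_int_add of_int_mult of_int_numeral)
  ultimately have "real_of_int a / 2 ^ Suc k
      = real_of_int \<lfloor>2 ^ k * f\<rfloor> / 2 ^ k + real_of_int (a mod 2) / 2 ^ Suc k"
    by (simp add: field_simps)
  moreover have "frac_bit f (Suc k) = a mod 2" unfolding frac_bit_def a_def ..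
  moreover have "a mod 2 = 0 \<or> a mod 2 = 1" by presburger
  ultimately show ?case
    using Suc unfolding frac_bits_sum_def a_def by (auto simp: power_one_over)
qed

lemma frac_bits_sum_exact:
  assumes "0 \<le> f" "f < 1" "2 ^ k * f \<in> \<int>"
  shows "frac_bits_sum f k = f"
proof -
  obtain z where z: "2 ^ k * f = real_of_int z" using assms(3) Ints_cases by metis
  have "\<lfloor>f\<rfloor> = 0" using assms by (simp add: floor_eq_iff)
  then show ?thesis unfolding frac_bits_sum_eq z floor_of_int by (simp flip: z)
qed

lemma relative_error_step:
  fixes \<alpha> :: real
  assumes "0 \<le> \<alpha>" and "real k * \<alpha> \<le> 1/2"
  shows "2 * real k * \<alpha> + 2 * real k * \<alpha> * \<alpha> + \<alpha> \<le> 2 * real (Suc k) * \<alpha>"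
proof -
  have "real k * \<alpha> * \<alpha> \<le> 1/2 * \<alpha>" using assms by (intro mult_right_mono)
  then show ?thesis by (simp add: algebra_simps)
qed

lemma fp_loop_error:
  fixes w E :: real
  assumes "1 < w"
    and roots: "\<And>i. 1 \<le> pow2_roots w n m b i \<and> \<bar>pow2_roots w n m b i - w powr (1 / 2 ^ Suc i)\<bar> \<le> E"
    and "0 \<le> E" and budget: "real N * (E + 1 / 2 ^ b) \<le> 1/2" and "k \<le> N"
  shows "\<bar>fp_loop w f n m b k - w powr frac_bits_sum f k\<bar>
    \<le> w powr frac_bits_sum f k * (2 * real k * (E + 1 / 2 ^ b))"
  using \<open>k \<le> N\<close>
proof (induction k)
  case 0
  then show ?case using \<open>1 < w\<close> by (simp add: frac_bits_sum_def)
next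
  case (Suc k)
  define \<alpha> where "\<alpha> = E + 1 / 2 ^ b"
  define P where "P = w powr frac_bits_sum f k"
  define T where "T = 2 * real k * \<alpha>"
  have "0 \<le> \<alpha>" "0 \<le> T" unfolding T_def \<alpha>_def using \<open>0 \<le> E\<close> by auto
  have "1 \<le> P"
    unfolding P_def using \<open>1 < w\<close> frac_bits_sum_nonneg[of f k] by (intro ge_one_powr_ge_zero) auto
  have IH: "\<bar>fp_loop w f n m b k - P\<bar> \<le> P * T" using Suc unfolding P_def T_def \<alpha>_def by simp
  have "real k * \<alpha> \<le> real N * \<alpha>" using Suc.prems \<open>0 \<le> \<alpha>\<close> by (intro mult_right_mono) auto
  then have "real k * \<alpha> \<le> 1/2" using budget unfolding \<alpha>_def by linarith
  then have T_next: "T + T * \<alpha> + \<alpha> \<le> 2 * real (Suc k) * \<alpha>"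
    unfolding T_def by (rule relative_error_step[OF \<open>0 \<le> \<alpha>\<close>])
  show ?case
  proof (cases "frac_bit f (Suc k) = 1")
    case True
    define z where "z = w powr (1 / 2 ^ Suc k)"
    have "1 \<le> z" unfolding z_def using \<open>1 < w\<close> by (simp add: ge_one_powr_ge_zero)
    have "w powr frac_bits_sum f (Suc k) = P * z"
      using True unfolding P_def z_def frac_bits_sum_def by (simp add: powr_add power_one_over)
    moreover have "fp_loop w f n m b (Suc k) = trunc_bits b (fp_loop w f n m b k * pow2_roots w n m b k)"
      using True by simp
    moreover have "\<bar>trunc_bits b (fp_loop w f n m b k * pow2_roots w n m b k) - P * z\<bar>
        \<le> P * z * (T + T * \<alpha> + \<alpha>)"
      using trunc_bits_product_error[OF IH, of "pow2_roots w n m b k" z E b] roots[of k]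
        \<open>1 \<le> P\<close> \<open>1 \<le> z\<close> \<open>0 \<le> T\<close> \<open>0 \<le> E\<close> unfolding z_def \<alpha>_def by simp
    moreover have "P * z * (T + T * \<alpha> + \<alpha>) \<le> P * z * (2 * real (Suc k) * \<alpha>)"
      using T_next \<open>1 \<le> P\<close> \<open>1 \<le> z\<close> by (intro mult_left_mono) auto
    ultimately show ?thesis unfolding \<alpha>_def by simp
  next
    case False
    have "P * T \<le> P * (2 * real (Suc k) * \<alpha>)"
      unfolding T_def using \<open>1 \<le> P\<close> \<open>0 \<le> \<alpha>\<close> by (intro mult_left_mono mult_right_mono) auto
    then show ?thesis
      using False IH unfolding P_def \<alpha>_def frac_bits_sum_def by simp
  qed
qed

section \<open>The error budget\<close>

lemma fp_b_bounds:
  assumes "1 \<le> nf"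
  shows "40 \<le> fp_b n m nf l" and "10 * m \<le> fp_b n m nf l"
    and "5 * (real l + 2 * real m + ln (real nf)) \<le> real (fp_b n m nf l)"
proof -
  let ?c = "nat \<lceil>5 * (real l + 2 * real m + ln (real nf))\<rceil>"
  have fin: "finite {n, nf, ?c, 40}" by simp
  show "40 \<le> fp_b n m nf l" unfolding fp_b_def by (rule Max_ge[OF fin]) simp
  have "?c \<le> fp_b n m nf l" unfolding fp_b_def by (rule Max_ge[OF fin]) simp
  then show c: "5 * (real l + 2 * real m + ln (real nf)) \<le> real (fp_b n m nf l)" by linarith
  have "0 \<le> ln (real nf)" using assms by simp
  then have "real (10 * m) \<le> real (fp_b n m nf l)" using c by simp
  then show "10 * m \<le> fp_b n m nf l" by (simp only: of_nat_le_iff)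
qed

lemma one_step_error_le:
  fixes b m :: nat
  assumes "40 \<le> b" and "10 * m \<le> b"
  shows "2 * (2 ^ m * sqrt_rel_error b m) + 1 / 2 ^ b \<le> 5 * 2 powr (real m - 3/8 * real b)"
proof -
  define X where "X = (2::real) ^ m"
  define T where "T = (2::real) powr (-(3/8) * real b)"
  have "1 \<le> X" unfolding X_def by simp
  have X_T: "X * T = 2 powr (real m - 3/8 * real b)"
    unfolding X_def T_def by (simp add: powr_realpow[symmetric] powr_add[symmetric])
  have "2 * (2 ^ m * sqrt_rel_error b m) + 1 / 2 ^ b = 4 * (X * T) + (12 * X * X + 24 * X + 1) / 2 ^ b"
    unfolding sqrt_rel_error_def X_def T_def by (simp add: field_simps)
  also have "(12 * X * X + 24 * X + 1) / 2 ^ b \<le> 2 ^ 6 * (X * X) / 2 ^ b"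
  proof (intro divide_right_mono)
    have "1 \<le> X * X" "X \<le> X * X" using \<open>1 \<le> X\<close> mult_mono[of 1 X 1 X] by auto
    then show "12 * X * X + 24 * X + 1 \<le> 2 ^ 6 * (X * X)" by simp
  qed simp
  also have "2 ^ 6 * (X * X) / 2 ^ b = 2 powr (6 + (real m + real m) - real b)"
    unfolding X_def powr_diff powr_add by (simp add: powr_realpow)
  also have "\<dots> \<le> 2 powr (real m - 3/8 * real b)" using assms by (intro powr_mono) auto
  finally show ?thesis unfolding X_T by simp
qed

lemma error_budget:
  fixes b nf m l :: nat
  assumes "40 \<le> b" "1 \<le> nf" "1 \<le> m" and b_ge: "5 * (real l + 2 * real m + ln (real nf)) \<le> real b"
  shows "5 * real nf * 2 powr (2 * real m - 3/8 * real b) \<le> 2 powr (- real l - 1)"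
proof -
  have "0 \<le> ln (real nf)" using assms by simp
  then have "ln (real nf) / ln 2 \<le> ln (real nf) / (2/3)"
    using ln_2_gt_two_thirds by (intro divide_left_mono) auto
  then have "log 2 (real nf) \<le> 3/2 * ln (real nf)" by (simp add: log_def)
  have "5 * real nf * 2 powr (2 * real m - 3/8 * real b)
      \<le> 2 powr 3 * 2 powr log 2 (real nf) * 2 powr (2 * real m - 3/8 * real b)"
    using assms by (intro mult_right_mono) auto
  also have "\<dots> = 2 powr (3 + log 2 (real nf) + (2 * real m - 3/8 * real b))"
    by (simp add: powr_add)
  also have "\<dots> \<le> 2 powr (- real l - 1)"
    using \<open>log 2 (real nf) \<le> _\<close> b_ge assms by (intro powr_mono) auto
  finally show ?thesis .
qed

lemma fp_loop_error_le:
  fixes w f :: real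
  assumes "1 < w" "w \<le> 2 ^ m" "0 \<le> f" "f < 1" "2 ^ nf * f \<in> \<int>" "1 \<le> nf"
  shows "\<bar>fp_loop w f n m (fp_b n m nf l) nf - w powr f\<bar> \<le> (1/2) powr (real l - 1)"
proof -
  define b where "b = fp_b n m nf l"
  note b = fp_b_bounds[OF \<open>1 \<le> nf\<close>, where n = n and m = m and l = l, folded b_def]
  have "1 \<le> m" using assms(1,2) by (cases m) auto
  define E where "E = 2 * (2 ^ m * sqrt_rel_error b m)"
  define Y where "Y = (2::real) powr (real m - 3/8 * real b)"
  have "0 \<le> E" unfolding E_def using sqrt_rel_error_nonneg by simp
  have \<alpha>_le: "E + 1 / 2 ^ b \<le> 5 * Y" unfolding E_def Y_def using one_step_error_le b(1,2) .
  have "2 powr (2 * real m - 3/8 * real b) = 2 ^ m * Y"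
    unfolding Y_def by (simp add: powr_realpow[symmetric] powr_add[symmetric])
  then have budget: "5 * real nf * (2 ^ m * Y) \<le> 2 powr (- real l - 1)"
    using error_budget[OF b(1) \<open>1 \<le> nf\<close> \<open>1 \<le> m\<close> b(3)] by simp
  have "Y \<le> 2 ^ m * Y" unfolding Y_def by simp
  have "real nf * (E + 1 / 2 ^ b) \<le> 5 * real nf * Y"
    using \<alpha>_le mult_left_mono[of "E + 1 / 2 ^ b" "5 * Y" "real nf"] by simp
  also have "\<dots> \<le> 5 * real nf * (2 ^ m * Y)" using \<open>Y \<le> 2 ^ m * Y\<close> by (intro mult_left_mono) auto
  also have "\<dots> \<le> 1/2" using budget powr_mono[of "- real l - 1" "-1" 2] by (simp add: powr_minus)
  finally have "real nf * (E + 1 / 2 ^ b) \<le> 1/2" .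
  moreover have "frac_bits_sum f nf = f" using assms(3-5) by (rule frac_bits_sum_exact)
  ultimately have "\<bar>fp_loop w f n m b nf - w powr f\<bar> \<le> w powr f * (2 * real nf * (E + 1 / 2 ^ b))"
    using fp_loop_error[OF \<open>1 < w\<close> _ \<open>0 \<le> E\<close>, of n m b nf nf f] pow2_roots_error[OF assms(1,2) b(1,2)]
    unfolding E_def by simp
  also have "\<dots> \<le> 2 ^ m * (2 * real nf * (5 * Y))"
    using \<alpha>_le \<open>0 \<le> E\<close> assms powr_mono[of f 1 w] by (intro mult_mono) auto
  also have "\<dots> \<le> 2 * 2 powr (- real l - 1)" using budget by (simp add: algebra_simps)
  also have "\<dots> \<le> (1/2) powr (real l - 1)"
    by (simp add: powr_diff powr_minus_divide powr_divide divide_right_mono)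
  finally show ?thesis unfolding b_def .
qed

theorem corollary2:
  fixes n m nf l :: nat and w F f :: real
  assumes w_repr: "\<exists>d :: int \<Rightarrow> nat. (\<forall>j. d j \<le> 1) \<and>
             w = (\<Sum>j\<in>{int m - int n .. int m - 1}. real (d j) * 2 powr real_of_int j)"
    and w_gt: "w > 1"
    and F_range: "0 \<le> F" "F \<le> 1"
    and f_range: "0 \<le> f" "f \<le> 1"
    and f_repr: "f = 1 \<or> (\<exists>fb :: nat \<Rightarrow> nat. (\<forall>i. fb i \<le> 1) \<and>
                    f = (\<Sum>i=1..nf. real (fb i) * 2 powr (- real i)))"
    and Ff: "\<bar>F - f\<bar> \<le> 2 powr (- real nf)"
  shows "\<bar>FractionalPower w f n m nf l - w powr F\<bar>
           \<le> (1/2) powr (real l - 1) + w * ln w / 2 ^ nf"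
proof -
  have "w \<le> 2 ^ m" using w_repr binary_number_le by blast
  have "\<bar>w powr f - w powr F\<bar> \<le> w * ln w * \<bar>f - F\<bar>"
    using w_gt F_range f_range by (intro abs_powr_diff_le) auto
  also have "\<dots> \<le> w * ln w / 2 ^ nf"
    using Ff w_gt by (simp add: abs_minus_commute powr_minus_divide powr_realpow divide_simps)
  finally have exponent_error: "\<bar>w powr f - w powr F\<bar> \<le> w * ln w / 2 ^ nf" .
  have "\<bar>FractionalPower w f n m nf l - w powr f\<bar> \<le> (1/2) powr (real l - 1)"
  proof (cases "f = 1 \<or> f = 0")
    case True
    then show ?thesis using w_gt by (auto simp: FractionalPower_def)
  next
    case False
    then obtain fb :: "nat \<Rightarrow> nat" where f_sum: "f = (\<Sum>i=1..nf. real (fb i) * 2 powr (- real i))"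
      using f_repr by blast
    then have "1 \<le> nf" using False by (cases nf) auto
    moreover have "2 ^ nf * f \<in> \<int>" unfolding f_sum by (rule binary_fraction_scaled_in_Ints)
    ultimately show ?thesis
      using fp_loop_error_le[OF w_gt \<open>w \<le> 2 ^ m\<close> f_range(1)] False f_range(2)
      unfolding FractionalPower_def Let_def by auto
  qed
  then show ?thesis using exponent_error by linarith
qed

end
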